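(* Let $V,s,c$ satisfy conditions (V), (S), (C) below, let $\mu_0\in\mathcal{M}^+(\mathbb{R}^d)$ with $\operatorname{supp}\mu_0\subseteq B(0,R_0)$, let $R$ be the radius in (S2), and set $\tilde R=\max\{R,R_0\}$. Let $\mu^N_t$ be the lattice approximate solution defined below. Then for all $N$ large enough, all $l=0,\dots,M$ and all $\tau\in[0,\Delta_N]$, $$\operatorname{supp}(\mu^N_{t_l+\tau})\subseteq B\bigl(0,e^{C_ST}(\tilde R+2)-1\bigr).$$ In particular, these measures are supported in a compact set independent of $N$, $l$ and $\tau$.
   Context: $\mathcal{M}^+(\mathbb{R}^k)$: finite nonnegative Borel measures; $\|f\|_{BL}=\max(\sup|f|,\operatorname{Lip}f)$, $\|\mu\|_{BL^*}=\sup\{\int\psi\,d\mu:\|\psi\|_{BL}\le1\}$. Conditions: (V) $V:\mathcal{M}^+(\mathbb{R}^d)\to\mathcal{M}^+(\mathbb{R}^d\times\mathbb{R}^d)$, $\pi_1^{\#}V[\mu]=\mu$; (V1) $\sup_{(x,v)\in\operatorname{supp}V[\mu]}|v|\le C_S(1+\sup_{(x,v)\in\operatorname{supp}V[\mu]}|x|)$; (V2) for each $R'>0$, $\|V[\mu]-V[\nu]\|_{BL^*}\le C_F(R')\|\mu-\nu\|_{BL^*}$ for $\mu,\nu$ supported in $B(0,R')$. (S) $s:\mathcal{M}^+(\mathbb{R}^d)\to\mathcal{M}^+(\mathbb{R}^d)$, (S1) $\|s[\mu]-s[\nu]\|_{BL^*}\le L\|\mu-\nu\|_{BL^*}$, (S2)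 $\operatorname{supp}s[\mu]\subseteq B(0,R)$ for all $\mu$. (C) $c:\mathbb{R}^d\times\mathcal{M}^+(\mathbb{R}^d)\to\mathbb{R}$, (C1) $|c|\le C_b$, (C2) $|c(x,\mu)-c(y,\nu)|\le C_L(|x-y|+\|\mu-\nu\|_{BL^*})$. Lattice scheme: fix $T>0$; for $N\in\mathbb{N}$, $\Delta_N=1/N$; $x_1,\dots,x_I$ enumerate $(N^{-2}\mathbb{Z}^d)\cap[-N,N]^d$, $v_1,\dots,v_J$ enumerate $(N^{-1}\mathbb{Z}^d)\cap[-N,N]^d$; $Q_i=x_i+[0,\Delta_N^2)^d$, $Q'_j=v_j+[0,\Delta_N)^d$; $m_i^x(\mu)=\mu(Q_i)$, $m_{ij}^v(W)=W(Q_i\times Q'_j)$. Time points $t_l=l/N$, $l=0,\dots,M$, with $M$ such that $[0,T]$ is covered by $[t_l,t_{l+1})$, $l<M$, and $[t_M,t_{M+1}]$, $t_{M+1}=T$, each of length at most $\Delta_N$. Set $\mu^N_0=\sum_i m_i^x(\mu_0)\delta_{x_i}$ and recursively, for $\tau\in[0,\Delta_N]$, $$\mu^N_{t_l+\tau}=\tau\sum_{i=1}^I m_i^x(s[\mu^N_{t_l}])\delta_{x_i}+\sum_{i=1}^I\sum_{j=1}^J m_{ij}^v(V[\mu^N_{t_l}])\,e^{c(x_i,\mu^N_{t_l})\tau}\,\delta_{x_i+\tau v_j}.$$ *)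

theory Defs
  imports "HOL-Analysis.Analysis"
begin

definition fin_borel :: "'a::topological_space measure \<Rightarrow> bool" where
  "fin_borel M \<longleftrightarrow> sets M = sets borel \<and> finite_measure M"

definition msupp :: "'a::metric_space measure \<Rightarrow> 'a set" where
  "msupp M = {x. \<forall>e>0. emeasure M (ball x e) > 0}"

text \<open>Bounded-Lipschitz norm of a function (as a value in ereal, so that it is
  infinite for unbounded or non-Lipschitz functions).\<close>
definition bl_norm :: "('a::metric_space \<Rightarrow> real) \<Rightarrow> ereal" where
  "bl_norm f = max (SUP x. ereal \<bar>f x\<bar>)
                   (SUP p\<in>{(x,y). x \<noteq> y}. ereal (\<bar>f (fst p) - f (snd p)\<bar> / dist (fst p) (snd p)))"

definition bl_dist :: "'a::metric_space measure \<Rightarrow> 'a measure \<Rightarrow> real" where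
  "bl_dist \<mu> \<nu> = Sup ((\<lambda>\<psi>. (\<integral>x. \<psi> x \<partial>\<mu>) - (\<integral>x. \<psi> x \<partial>\<nu>)) ` {\<psi>. bl_norm \<psi> \<le> 1})"

definition wmeas :: "'i set \<Rightarrow> ('i \<Rightarrow> 'a::topological_space) \<Rightarrow> ('i \<Rightarrow> real) \<Rightarrow> 'a measure" where
  "wmeas I p w = measure_of UNIV (sets borel) (\<lambda>A. \<Sum>i\<in>I. ennreal (w i) * indicator A (p i))"

definition xgrid :: "nat \<Rightarrow> ((real^'d) set)" where
  "xgrid N = {x. \<forall>k. (\<exists>z::int. x$k = real_of_int z / (real N)^2) \<and> \<bar>x$k\<bar> \<le> real N}"

definition vgrid :: "nat \<Rightarrow> ((real^'d) set)" where
  "vgrid N = {v. \<forall>k. (\<exists>z::int. v$k = real_of_int z / real N) \<and> \<bar>v$k\<bar> \<le> real N}"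

definition cellx :: "nat \<Rightarrow> real^'d \<Rightarrow> ((real^'d) set)" where
  "cellx N x = {y. \<forall>k. x$k \<le> y$k \<and> y$k < x$k + 1 / (real N)^2}"

definition cellv :: "nat \<Rightarrow> real^'d \<Rightarrow> ((real^'d) set)" where
  "cellv N v = {y. \<forall>k. v$k \<le> y$k \<and> y$k < v$k + 1 / real N}"

definition lattice_step ::
  "nat \<Rightarrow> ((real^'d) measure \<Rightarrow> ((real^'d) \<times> (real^'d)) measure) \<Rightarrow> ((real^'d) measure \<Rightarrow> (real^'d) measure)
   \<Rightarrow> (real^'d \<Rightarrow> (real^'d) measure \<Rightarrow> real) \<Rightarrow> (real^'d) measure \<Rightarrow> real \<Rightarrow> (real^'d) measure" where
  "lattice_step N V s c \<mu> \<tau> =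
     wmeas (Inl ` xgrid N \<union> Inr ` (xgrid N \<times> vgrid N))
       (case_sum (\<lambda>x. x) (\<lambda>(x,v). x + \<tau> *\<^sub>R v))
       (case_sum (\<lambda>x. \<tau> * measure (s \<mu>) (cellx N x))
                 (\<lambda>(x,v). measure (V \<mu>) (cellx N x \<times> cellv N v) * exp (c x \<mu> * \<tau>)))"

definition lattice_init :: "nat \<Rightarrow> (real^'d) measure \<Rightarrow> (real^'d) measure" where
  "lattice_init N \<mu>0 = wmeas (xgrid N) (\<lambda>x. x) (\<lambda>x. measure \<mu>0 (cellx N x))"

text \<open>lattice_node ... l = mu^N_(t_l), with t_l = l / N.\<close>
primrec lattice_node ::
  "nat \<Rightarrow> ((real^'d) measure \<Rightarrow> ((real^'d) \<times> (real^'d)) measure) \<Rightarrow> ((real^'d) measure \<Rightarrow> (real^'d) measure)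
   \<Rightarrow> (real^'d \<Rightarrow> (real^'d) measure \<Rightarrow> real) \<Rightarrow> (real^'d) measure \<Rightarrow> nat \<Rightarrow> (real^'d) measure" where
  "lattice_node N V s c \<mu>0 0 = lattice_init N \<mu>0"
| "lattice_node N V s c \<mu>0 (Suc l) = lattice_step N V s c (lattice_node N V s c \<mu>0 l) (1 / real N)"

text \<open>lattice_sol ... l tau = mu^N_(t_l + tau), for tau in [0, 1/N].\<close>
definition lattice_sol ::
  "nat \<Rightarrow> ((real^'d) measure \<Rightarrow> ((real^'d) \<times> (real^'d)) measure) \<Rightarrow> ((real^'d) measure \<Rightarrow> (real^'d) measure)
   \<Rightarrow> (real^'d \<Rightarrow> (real^'d) measure \<Rightarrow> real) \<Rightarrow> (real^'d) measure \<Rightarrow> nat \<Rightarrow> real \<Rightarrow> (real^'d) measure" where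
  "lattice_sol N V s c \<mu>0 l \<tau> = lattice_step N V s c (lattice_node N V s c \<mu>0 l) \<tau>"

end

theory Submission
  imports Defs "HOL-Probability.Giry_Monad"
begin

(* Let rho be one plus the radius of a centred ball containing the support.  One step of the
   scheme creates mass only at lattice points whose cell meets supp s[mu], i.e. within
   R + d/N^2 of the origin, and otherwise moves a lattice point lying within d/N^2 of supp mu
   by tau v_j, where v_j is within d/N of a velocity of norm at most C_S rho by (V1).  Hence
   rho grows per step to at most rho (1 + C_S/N) + 2d/N^2, and after at most T N + 1 steps it
   is at most (max R R0 + 1 + O(1/N)) e^(C_S T) e^(C_S/N), which is below
   e^(C_S T) (max R R0 + 2) once N is large. *)

lemma sets_wmeas [simp]: "sets (wmeas I p w) = sets borel"
  unfolding wmeas_def by (metis sets.sets_measure_of_eq space_borel)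

lemma emeasure_wmeas_le: "emeasure (wmeas I p w) A \<le> (\<Sum>i\<in>I. ennreal (w i) * indicator A (p i))"
  unfolding wmeas_def emeasure_measure_of_conv by auto

lemma fin_borel_wmeas: "fin_borel (wmeas I p w)"
proof -
  have "(\<Sum>i\<in>I. ennreal (w i) * indicator UNIV (p i)) < \<infinity>"
    by (cases "finite I") (auto simp: ennreal_sum_less_top)
  then have "emeasure (wmeas I p w) UNIV \<noteq> \<infinity>"
    using emeasure_wmeas_le[of I p w UNIV] by (metis le_less_trans less_irrefl)
  then show ?thesis
    unfolding fin_borel_def by (auto intro!: finite_measureI simp: sets_eq_imp_space_eq[of _ borel])
qed

lemma msupp_wmeas_subset: "msupp (wmeas I p w) \<subseteq> p ` {i\<in>I. 0 < w i}"
proof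
  fix x assume x: "x \<in> msupp (wmeas I p w)"
  show "x \<in> p ` {i\<in>I. 0 < w i}"
  proof (rule ccontr)
    assume x_notin: "x \<notin> p ` {i\<in>I. 0 < w i}"
    \<comment> \<open>a sum over an infinite \<open>I\<close> is \<open>0\<close>, so then any radius works\<close>
    obtain e where e: "0 < e" "finite I \<Longrightarrow> ball x e \<inter> p ` {i\<in>I. 0 < w i} = {}"
    proof (cases "finite I")
      case True
      then have "open (- p ` {i\<in>I. 0 < w i})" by (intro open_Compl finite_imp_closed) simp
      with x_notin obtain e where "0 < e" "ball x e \<subseteq> - p ` {i\<in>I. 0 < w i}"
        by (meson ComplI openE)
      then show ?thesis using that by blast
    qed (use that in \<open>auto intro: zero_less_one\<close>)
    have "(\<Sum>i\<in>I. ennreal (w i) * indicator (ball x e) (p i)) = 0"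
      using e(2) by (cases "finite I") (auto intro!: sum.neutral simp: ennreal_eq_0_iff indicator_def)
    then have "emeasure (wmeas I p w) (ball x e) = 0"
      using emeasure_wmeas_le[of I p w "ball x e"] by simp
    with x e(1) show False unfolding msupp_def by auto
  qed
qed

lemma pos_emeasure_meets_msupp:
  fixes M :: "'a::{metric_space, second_countable_topology} measure"
  assumes M: "sets M = sets borel" and pos: "0 < emeasure M A"
  shows "A \<inter> msupp M \<noteq> {}"
proof
  assume disj: "A \<inter> msupp M = {}"
  define F where "F = {ball y e |y e. 0 < e \<and> emeasure M (ball y e) = 0}"
  have "A \<subseteq> \<Union>F"
  proof
    fix y assume "y \<in> A"
    with disj have "y \<notin> msupp M" by blast
    then obtain e where "0 < e" "emeasure M (ball y e) = 0"
      unfolding msupp_def using not_gr_zero by blast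
    then show "y \<in> \<Union>F" unfolding F_def by force
  qed
  moreover obtain F' where F': "F' \<subseteq> F" "countable F'" "\<Union>F' = \<Union>F"
    by (rule Lindelof[of F]) (auto simp: F_def)
  have "\<Union>F' \<in> null_sets M"
    using F' M by (intro null_sets_UN'[where N = id, simplified]) (auto simp: F_def null_setsI)
  ultimately have "A \<in> null_sets M \<or> A \<notin> sets M"
    using F'(3) null_sets_subset by metis
  with pos show False by (auto simp: emeasure_notin_sets)
qed

lemma pos_measure_meets_msupp:
  fixes M :: "'a::{metric_space, second_countable_topology} measure"
  assumes "sets M = sets borel" and "0 < measure M A"
  shows "A \<inter> msupp M \<noteq> {}"
  using pos_emeasure_meets_msupp[of M A] assms by (simp add: measure_def enn2real_positive_iff)

lemma measurable_fst_borel: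
  fixes W :: "('a::metric_space \<times> 'b::metric_space) measure"
  assumes "sets W = sets borel"
  shows "fst \<in> W \<rightarrow>\<^sub>M borel"
  by (subst measurable_cong_sets[OF assms refl]) (intro borel_measurable_continuous_onI continuous_intros)

lemma msupp_distr_fst:
  fixes W :: "('a::metric_space \<times> 'b::metric_space) measure"
  assumes W: "sets W = sets borel" and yv: "(y, v) \<in> msupp W"
  shows "y \<in> msupp (distr W borel fst)"
  unfolding msupp_def
proof (intro CollectI allI impI)
  fix e :: real assume "0 < e"
  have "ball (y, v) e \<subseteq> fst -` ball y e \<inter> space W"
  proof (clarsimp simp: sets_eq_imp_space_eq[OF W] dist_commute)
    fix a b assume "dist (a, b) (y, v) < e"
    then show "dist a y < e" using dist_fst_le[of "(a, b)" "(y, v)"] by simp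
  qed
  then have "emeasure W (ball (y, v) e) \<le> emeasure (distr W borel fst) (ball y e)"
    using measurable_fst_borel[OF W] by (auto simp: emeasure_distr intro!: emeasure_mono measurable_sets)
  moreover have "0 < emeasure W (ball (y, v) e)"
    using yv \<open>0 < e\<close> unfolding msupp_def by auto
  ultimately show "0 < emeasure (distr W borel fst) (ball y e)" by auto
qed

lemma norm_diff_le_if_in_box:
  fixes a y :: "real^'d"
  assumes "\<And>k. a$k \<le> y$k \<and> y$k < a$k + h"
  shows "norm (y - a) \<le> real CARD('d) * h"
proof -
  have "norm (y - a) \<le> (\<Sum>k\<in>UNIV. \<bar>(y - a) $ k\<bar>)" by (rule norm_le_l1_cart)
  also have "\<dots> \<le> (\<Sum>k\<in>(UNIV::'d set). h)"
    using assms by (intro sum_mono) (smt (verit) vector_minus_component)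
  finally show ?thesis by simp
qed

lemma norm_diff_cellx: "y \<in> cellx N x \<Longrightarrow> norm (y - x) \<le> real CARD('d) / (real N)^2"
  for x y :: "real^'d"
  using norm_diff_le_if_in_box[of x y "1 / (real N)^2"] by (simp add: cellx_def)

lemma norm_diff_cellv: "v \<in> cellv N w \<Longrightarrow> norm (v - w) \<le> real CARD('d) / real N"
  for v w :: "real^'d"
  using norm_diff_le_if_in_box[of w v "1 / real N"] by (simp add: cellv_def)

(* (A + n e) q^n dominates the solution of rho (n + 1) = rho n * q + e, rho 0 = A, when q >= 1. *)
definition growth_bound :: "real \<Rightarrow> real \<Rightarrow> real \<Rightarrow> nat \<Rightarrow> real" where
  "growth_bound A e q n = (A + real n * e) * q ^ n"

lemma growth_bound_step:
  assumes "1 \<le> q" "0 \<le> e"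
  shows "growth_bound A e q n * q + e \<le> growth_bound A e q (Suc n)"
proof -
  have "e * 1 \<le> e * q ^ Suc n"
    using assms by (intro mult_left_mono one_le_power)
  then show ?thesis by (simp add: growth_bound_def algebra_simps)
qed

lemma growth_bound_ge_start:
  assumes "1 \<le> q" "0 \<le> e" "0 \<le> A"
  shows "A \<le> growth_bound A e q n"
proof -
  have "A \<le> A + real n * e" using assms by simp
  also have "\<dots> \<le> (A + real n * e) * q ^ n"
    using assms mult_left_mono[OF one_le_power[of q n], of "A + real n * e"] by simp
  finally show ?thesis by (simp add: growth_bound_def)
qed

lemma one_plus_power_le_exp:
  fixes C N T :: real
  assumes "0 \<le> C" "0 < N" "real n \<le> T * N + 1"
  shows "(1 + C / N) ^ n \<le> exp (C * T) * exp (C / N)"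
proof -
  have "(1 + C / N) ^ n \<le> exp (C / N) ^ n"
    using assms by (intro power_mono exp_ge_add_one_self) auto
  also have "\<dots> = exp (C * (real n / N))" by (simp add: exp_of_nat_mult[symmetric])
  also have "\<dots> \<le> exp (C * (T + 1 / N))"
    using assms by (intro exp_le_cancel_iff[THEN iffD2] mult_left_mono) (auto simp: field_simps)
  finally show ?thesis by (simp add: distrib_left exp_add)
qed

lemma lattice_error_sum_le:
  fixes d N T :: real
  assumes "0 \<le> d" "1 \<le> N" "real n \<le> T * N + 1"
  shows "d / N^2 + real n * (2 * d / N^2) \<le> (2 * d * T + 3 * d) / N"
proof -
  have "d / N^2 + real n * (2 * d / N^2) \<le> d / N^2 + (T * N + 1) * (2 * d / N^2)"
    using assms by (intro add_left_mono mult_right_mono) auto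
  also have "\<dots> = (2 * d * T + 3 * d / N) / N"
    using assms by (simp add: field_simps power2_eq_square)
  also have "\<dots> \<le> (2 * d * T + 3 * d) / N"
    using assms mult_right_mono[of 1 N d] by (intro divide_right_mono add_left_mono) (auto simp: field_simps)
  finally show ?thesis .
qed

lemma growth_bound_le_exp:
  fixes B C T N d :: real
  assumes "0 \<le> C" "0 \<le> d" "1 \<le> N" "real n \<le> T * N + 1"
    and large: "(B + 1 + (2 * d * T + 3 * d) / N) * exp (C / N) \<le> B + 2"
    and nonneg: "0 \<le> growth_bound (B + 1 + d / N^2) (2 * d / N^2) (1 + C / N) n"
  shows "growth_bound (B + 1 + d / N^2) (2 * d / N^2) (1 + C / N) n \<le> exp (C * T) * (B + 2)"
proof -
  define Z where "Z = B + 1 + d / N^2 + real n * (2 * d / N^2)"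
  have "0 < (1 + C / N) ^ n" using assms by (intro zero_less_power add_pos_nonneg) auto
  with nonneg have Z: "0 \<le> Z"
    unfolding growth_bound_def Z_def by (simp add: zero_le_mult_iff)
  have "growth_bound (B + 1 + d / N^2) (2 * d / N^2) (1 + C / N) n = Z * (1 + C / N) ^ n"
    by (simp add: growth_bound_def Z_def)
  also have "\<dots> \<le> exp (C * T) * (Z * exp (C / N))"
    using one_plus_power_le_exp[of C N n T] Z assms by (simp add: mult_left_mono mult_ac)
  also have "\<dots> \<le> exp (C * T) * ((B + 1 + (2 * d * T + 3 * d) / N) * exp (C / N))"
    using lattice_error_sum_le[of d N n T] assms unfolding Z_def
    by (intro mult_left_mono mult_right_mono) auto
  also have "\<dots> \<le> exp (C * T) * (B + 2)"
    using large by simp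
  finally show ?thesis .
qed

lemma eventually_growth_factor_lt:
  "eventually (\<lambda>N. (B + 1 + K / real N) * exp (C / real N) < B + 2) sequentially"
proof -
  have "(\<lambda>N. (B + 1 + K / real N) * exp (C / real N)) \<longlonglongrightarrow> (B + 1 + 0) * exp 0"
    by (intro tendsto_intros tendsto_divide_0[OF tendsto_const] filterlim_real_sequentially)
  then show ?thesis by (rule order_tendstoD) simp
qed

lemma fin_borel_lattice_node: "fin_borel (lattice_node N V s c \<mu>0 l)"
  by (cases l) (simp_all only: lattice_node.simps lattice_init_def lattice_step_def fin_borel_wmeas)

lemma msupp_lattice_init_subset:
  fixes \<mu>0 :: "(real^'d) measure"
  assumes "sets \<mu>0 = sets borel" and "msupp \<mu>0 \<subseteq> ball 0 r"
  shows "msupp (lattice_init N \<mu>0) \<subseteq> ball 0 (r + real CARD('d) / (real N)^2)"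
proof
  fix x assume "x \<in> msupp (lattice_init N \<mu>0)"
  then have "0 < measure \<mu>0 (cellx N x)"
    using msupp_wmeas_subset[of "xgrid N" "\<lambda>x. x" "\<lambda>x. measure \<mu>0 (cellx N x)"]
    unfolding lattice_init_def by blast
  then obtain y where y: "y \<in> cellx N x" "y \<in> msupp \<mu>0"
    using pos_measure_meets_msupp assms(1) by blast
  have "norm x \<le> norm y + norm (y - x)"
    using norm_triangle_sub[of x y] by (simp add: norm_minus_commute)
  moreover have "norm y < r" using y(2) assms(2) by auto
  ultimately show "x \<in> ball 0 (r + real CARD('d) / (real N)^2)"
    using norm_diff_cellx[OF y(1)] by simp
qed

lemma msupp_lattice_step_cases [consumes 3, case_names source transport]:
  assumes "x \<in> msupp (lattice_step N V s c \<mu> \<tau>)"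
    and "sets (s \<mu>) = sets borel" "sets (V \<mu>) = sets borel"
  obtains (source) y where "y \<in> cellx N x" "y \<in> msupp (s \<mu>)"
  | (transport) x' w y v where "x = x' + \<tau> *\<^sub>R w" "y \<in> cellx N x'" "v \<in> cellv N w"
      "(y, v) \<in> msupp (V \<mu>)"
proof -
  from subsetD[OF msupp_wmeas_subset assms(1)[unfolded lattice_step_def]]
  obtain i where
    pos: "0 < case_sum (\<lambda>x. \<tau> * measure (s \<mu>) (cellx N x))
                 (\<lambda>(x, v). measure (V \<mu>) (cellx N x \<times> cellv N v) * exp (c x \<mu> * \<tau>)) i"
    and x: "x = case_sum (\<lambda>x. x) (\<lambda>(x, v). x + \<tau> *\<^sub>R v) i"
    by (elim imageE CollectE conjE) simp
  show thesis
  proof (cases i)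
    case (Inl x')
    with pos have "0 < measure (s \<mu>) (cellx N x')"
      using measure_nonneg[of "s \<mu>" "cellx N x'"] by (simp add: zero_less_mult_iff)
    then obtain y where "y \<in> cellx N x'" "y \<in> msupp (s \<mu>)"
      using pos_measure_meets_msupp[OF assms(2)] by blast
    with Inl x show thesis using source by simp
  next
    case (Inr xw)
    then obtain x' w where xw: "i = Inr (x', w)" by (cases xw) auto
    with pos have "0 < measure (V \<mu>) (cellx N x' \<times> cellv N w)"
      by (simp add: zero_less_mult_iff)
    then obtain y v where "(y, v) \<in> cellx N x' \<times> cellv N w" "(y, v) \<in> msupp (V \<mu>)"
      using pos_measure_meets_msupp[OF assms(3)] by blast
    with xw x show thesis using transport[of x' w y v] by simp
  qed
qed

(* Conditions (V), (V1), (S), (S2). *)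
locale transport_source_bounds =
  fixes V :: "(real^'d) measure \<Rightarrow> ((real^'d) \<times> (real^'d)) measure"
    and s :: "(real^'d) measure \<Rightarrow> (real^'d) measure"
    and C_S R :: real
  assumes V: "\<And>\<mu>. fin_borel \<mu> \<Longrightarrow> fin_borel (V \<mu>) \<and> distr (V \<mu>) borel fst = \<mu>"
    and V1: "\<And>\<mu> r. fin_borel \<mu> \<Longrightarrow> (\<forall>(x,v)\<in>msupp (V \<mu>). norm x \<le> r) \<Longrightarrow>
               (\<forall>(x,v)\<in>msupp (V \<mu>). norm v \<le> C_S * (1 + r))"
    and S: "\<And>\<mu>. fin_borel \<mu> \<Longrightarrow> fin_borel (s \<mu>)"
    and S2: "\<And>\<mu>. fin_borel \<mu> \<Longrightarrow> msupp (s \<mu>) \<subseteq> ball 0 R"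
begin

lemma sets_V: "fin_borel \<mu> \<Longrightarrow> sets (V \<mu>) = sets borel"
  using V unfolding fin_borel_def by blast

lemma fst_msupp_V:
  assumes "fin_borel \<mu>" "(y, v) \<in> msupp (V \<mu>)"
  shows "y \<in> msupp \<mu>"
  using msupp_distr_fst[OF sets_V[OF assms(1)] assms(2)] V[OF assms(1)] by simp

lemma velocity_bound:
  assumes "fin_borel \<mu>" "msupp \<mu> \<subseteq> ball 0 r" "(y, v) \<in> msupp (V \<mu>)"
  shows "norm v \<le> C_S * (1 + r)"
proof -
  have "\<forall>(x, v)\<in>msupp (V \<mu>). norm x \<le> r"
  proof clarify
    fix x v assume "(x, v) \<in> msupp (V \<mu>)"
    then have "x \<in> msupp \<mu>" using fst_msupp_V[OF assms(1)] by blast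
    then show "norm x \<le> r" using assms(2) by auto
  qed
  then show ?thesis using V1[OF assms(1)] assms(3) by blast
qed

lemma C_S_nonneg: "0 \<le> C_S"
proof -
  define \<delta> :: "(real^'d) measure" where "\<delta> = return borel 0"
  have \<delta>: "fin_borel \<delta>"
    unfolding fin_borel_def \<delta>_def by (simp add: prob_space_return prob_space.finite_measure)
  have "msupp \<delta> \<subseteq> ball 0 1"
  proof
    fix y assume "y \<in> msupp \<delta>"
    then have "0 < emeasure \<delta> (ball y 1)" unfolding msupp_def by simp
    then show "y \<in> ball 0 1"
      unfolding \<delta>_def by (simp add: indicator_def dist_norm of_bool_def split: if_splits)
  qed
  moreover have "emeasure (V \<delta>) UNIV = emeasure \<delta> UNIV"
    using V[OF \<delta>] emeasure_distr[OF measurable_fst_borel[OF sets_V[OF \<delta>]], of UNIV]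
      sets_eq_imp_space_eq[OF sets_V[OF \<delta>]] by simp
  then have "0 < emeasure (V \<delta>) UNIV" unfolding \<delta>_def by simp
  then obtain y v where "(y, v) \<in> msupp (V \<delta>)"
    using pos_emeasure_meets_msupp[OF sets_V[OF \<delta>]] by fast
  ultimately have "norm v \<le> 2 * C_S" using velocity_bound[OF \<delta>] by fastforce
  then show ?thesis using norm_ge_zero[of v] by linarith
qed

lemma msupp_lattice_step_subset:
  assumes \<mu>: "fin_borel \<mu>" and r: "msupp \<mu> \<subseteq> ball 0 r" and \<tau>: "0 \<le> \<tau>" "\<tau> \<le> 1 / real N"
  shows "msupp (lattice_step N V s c \<mu> \<tau>) \<subseteq>
    ball 0 (R + real CARD('d) / (real N)^2) \<union>
    ball 0 (r + C_S * (1 + r) / real N + 2 * real CARD('d) / (real N)^2)"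
proof
  let ?d = "real CARD('d)"
  fix x assume x: "x \<in> msupp (lattice_step N V s c \<mu> \<tau>)"
  have "sets (s \<mu>) = sets borel" using S[OF \<mu>] unfolding fin_borel_def by blast
  from x this sets_V[OF \<mu>]
  show "x \<in> ball 0 (R + ?d / (real N)^2) \<union> ball 0 (r + C_S * (1 + r) / real N + 2 * ?d / (real N)^2)"
  proof (cases rule: msupp_lattice_step_cases)
    case (source y)
    have "norm x \<le> norm y + norm (y - x)"
      using norm_triangle_sub[of x y] by (simp add: norm_minus_commute)
    moreover have "norm y < R" using source(2) S2[OF \<mu>] by auto
    ultimately show ?thesis using norm_diff_cellx[OF source(1)] by simp
  next
    case (transport x' w y v)
    have y: "norm y < r" using fst_msupp_V[OF \<mu> transport(4)] r by auto
    have v: "norm v \<le> C_S * (1 + r)" using velocity_bound[OF \<mu> r transport(4)] .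
    have "norm x' \<le> norm y + ?d / (real N)^2"
      using norm_diff_cellx[OF transport(2)] norm_triangle_sub[of x' y] by (simp add: norm_minus_commute)
    moreover have "norm w \<le> C_S * (1 + r) + ?d / real N"
      using norm_diff_cellv[OF transport(3)] norm_triangle_sub[of w v] v by (simp add: norm_minus_commute)
    then have "\<tau> * norm w \<le> 1 / real N * (C_S * (1 + r) + ?d / real N)"
      using \<tau> v by (intro mult_mono) auto
    ultimately have "norm x < r + ?d / (real N)^2 + 1 / real N * (C_S * (1 + r) + ?d / real N)"
      using norm_triangle_ineq[of x' "\<tau> *\<^sub>R w"] y \<tau> transport(1) by simp
    also have "\<dots> = r + C_S * (1 + r) / real N + 2 * ?d / (real N)^2"
      by (cases "N = 0") (simp_all add: field_simps power2_eq_square)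
    finally show ?thesis by simp
  qed
qed

lemma msupp_lattice_sol_subset:
  assumes \<mu>0: "fin_borel \<mu>0" "msupp \<mu>0 \<subseteq> ball 0 R0" and \<tau>: "0 \<le> \<tau>" "\<tau> \<le> 1 / real N"
  defines "d \<equiv> real CARD('d)"
  shows "msupp (lattice_sol N V s c \<mu>0 l \<tau>) \<subseteq>
    ball 0 (growth_bound (max R R0 + 1 + d / (real N)^2) (2 * d / (real N)^2) (1 + C_S / real N) (Suc l) - 1)"
proof -
  define A where "A = max R R0 + 1 + d / (real N)^2"
  define u where "u = growth_bound A (2 * d / (real N)^2) (1 + C_S / real N)"
  have q: "1 \<le> 1 + C_S / real N" using C_S_nonneg by simp
  have e: "0 \<le> 2 * d / (real N)^2" unfolding d_def by simp
  have step: "msupp (lattice_step N V s c \<mu> t) \<subseteq> ball 0 (u (Suc k) - 1)"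
    if "fin_borel \<mu>" "msupp \<mu> \<subseteq> ball 0 (u k - 1)" "0 \<le> t" "t \<le> 1 / real N" for \<mu> k t
  proof -
    have "ball 0 (R + d / (real N)^2) \<subseteq> ball (0::real^'d) (u (Suc k) - 1)"
    proof (cases "R + d / (real N)^2 \<le> 0")
      case False
      then have "A \<le> u (Suc k)"
        unfolding u_def A_def using q e by (intro growth_bound_ge_start) auto
      then show ?thesis unfolding A_def by (intro subset_ball) linarith
    qed (simp add: ball_subset_ball_iff)
    moreover have "ball 0 (u k - 1 + C_S * (1 + (u k - 1)) / real N + 2 * d / (real N)^2)
        \<subseteq> ball (0::real^'d) (u (Suc k) - 1)"
      using growth_bound_step[OF q e, of A k]
      unfolding u_def by (intro subset_ball) (simp add: field_simps)
    ultimately show ?thesis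
      using msupp_lattice_step_subset[OF that] unfolding d_def by blast
  qed
  have node: "msupp (lattice_node N V s c \<mu>0 k) \<subseteq> ball 0 (u k - 1)" for k
  proof (induction k)
    case 0
    have "R0 + d / (real N)^2 \<le> u 0 - 1" unfolding u_def A_def growth_bound_def by simp
    then show ?case
      using msupp_lattice_init_subset[of \<mu>0 R0 N] \<mu>0 unfolding d_def fin_borel_def by auto
  next
    case (Suc k)
    then show ?case using step[OF fin_borel_lattice_node] by simp
  qed
  show ?thesis
    using step[OF fin_borel_lattice_node node \<tau>] unfolding lattice_sol_def u_def A_def .
qed

end

theorem lemma4p3:
  fixes V :: "(real^'d) measure \<Rightarrow> ((real^'d) \<times> (real^'d)) measure"
    and s :: "(real^'d) measure \<Rightarrow> (real^'d) measure"
    and c :: "real^'d \<Rightarrow> (real^'d) measure \<Rightarrow> real"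
    and \<mu>0 :: "(real^'d) measure"
    and C_S L R C_b C_L R0 T :: real
    and C_F :: "real \<Rightarrow> real"
  assumes V: "\<And>\<mu>. fin_borel \<mu> \<Longrightarrow> fin_borel (V \<mu>) \<and> distr (V \<mu>) borel fst = \<mu>"
    and V1: "\<And>\<mu> r. fin_borel \<mu> \<Longrightarrow> (\<forall>(x,v)\<in>msupp (V \<mu>). norm x \<le> r) \<Longrightarrow>
               (\<forall>(x,v)\<in>msupp (V \<mu>). norm v \<le> C_S * (1 + r))"
    and V2: "\<And>R' \<mu> \<nu>. R' > 0 \<Longrightarrow> fin_borel \<mu> \<Longrightarrow> fin_borel \<nu> \<Longrightarrow>
               msupp \<mu> \<subseteq> ball 0 R' \<Longrightarrow> msupp \<nu> \<subseteq> ball 0 R' \<Longrightarrow>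
               bl_dist (V \<mu>) (V \<nu>) \<le> C_F R' * bl_dist \<mu> \<nu>"
    and S: "\<And>\<mu>. fin_borel \<mu> \<Longrightarrow> fin_borel (s \<mu>)"
    and S1: "\<And>\<mu> \<nu>. fin_borel \<mu> \<Longrightarrow> fin_borel \<nu> \<Longrightarrow> bl_dist (s \<mu>) (s \<nu>) \<le> L * bl_dist \<mu> \<nu>"
    and S2: "\<And>\<mu>. fin_borel \<mu> \<Longrightarrow> msupp (s \<mu>) \<subseteq> ball 0 R"
    and C1: "\<And>x \<mu>. fin_borel \<mu> \<Longrightarrow> \<bar>c x \<mu>\<bar> \<le> C_b"
    and C2: "\<And>x y \<mu> \<nu>. fin_borel \<mu> \<Longrightarrow> fin_borel \<nu> \<Longrightarrow>
               \<bar>c x \<mu> - c y \<nu>\<bar> \<le> C_L * (dist x y + bl_dist \<mu> \<nu>)"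
    and mu0: "fin_borel \<mu>0" "msupp \<mu>0 \<subseteq> ball 0 R0"
    and T: "T > 0"
  shows "\<exists>N0. \<forall>N\<ge>N0. \<forall>l \<tau>. real l \<le> T * real N \<longrightarrow> 0 \<le> \<tau> \<longrightarrow> \<tau> \<le> 1 / real N \<longrightarrow>
           msupp (lattice_sol N V s c \<mu>0 l \<tau>) \<subseteq> ball 0 (exp (C_S * T) * (max R R0 + 2) - 1)"
proof -
  interpret transport_source_bounds V s C_S R
    using V V1 S S2 by unfold_locales blast+
  let ?d = "real CARD('d)"
  let ?K = "2 * ?d * T + 3 * ?d"
  obtain N0 where N0: "\<And>N. N \<ge> N0 \<Longrightarrow> 1 \<le> real N \<and>
      (max R R0 + 1 + ?K / real N) * exp (C_S / real N) < max R R0 + 2"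
    using eventually_conj[OF eventually_ge_at_top[of 1] eventually_growth_factor_lt]
    unfolding eventually_sequentially by force
  show ?thesis
  proof (intro exI[of _ N0] allI impI)
    fix N l \<tau> assume "N0 \<le> N" "real l \<le> T * real N" "0 \<le> \<tau>" "\<tau> \<le> 1 / real N"
    moreover define u where "u = growth_bound (max R R0 + 1 + ?d / (real N)^2) (2 * ?d / (real N)^2)
      (1 + C_S / real N) (Suc l)"
    ultimately have "msupp (lattice_sol N V s c \<mu>0 l \<tau>) \<subseteq> ball 0 (u - 1)"
      using msupp_lattice_sol_subset[OF mu0] by simp
    also have "\<dots> \<subseteq> ball 0 (exp (C_S * T) * (max R R0 + 2) - 1)"
    proof (cases "u \<le> 1")
      case False
      with N0[OF \<open>N0 \<le> N\<close>] \<open>real l \<le> T * real N\<close> have "u \<le> exp (C_S * T) * (max R R0 + 2)"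
        unfolding u_def by (intro growth_bound_le_exp C_S_nonneg) auto
      then show ?thesis by (intro subset_ball) simp
    qed (simp add: ball_subset_ball_iff)
    finally show "msupp (lattice_sol N V s c \<mu>0 l \<tau>) \<subseteq> ball 0 (exp (C_S * T) * (max R R0 + 2) - 1)" .
  qed
qed

end
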